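(* If $G$ is a bipartite $\epsilon$-expander with $2n$ vertices, then every separator in $G$ has size at least $\frac{\epsilon}{2}(n-1)-1$.
   Context: For $\epsilon\in(0,1]$, a bipartite graph $G$ with bipartition $A,B$ is a bipartite $\epsilon$-expander if $|A|=|B|$ and $|N(S)|\geq(1+\epsilon)|S|$ for every $S\subset A$ with $|S|\leq|A|/2$, where $N(S)$ is the set of vertices adjacent to some vertex of $S$. A separator in a graph $G$ is a set $Z\subseteq V(G)$ such that each component of $G-Z$ has at most $|V(G)|/2$ vertices. *)

theory Defs
  imports Complex_Main
begin

definition simple_graph :: "'a set \<Rightarrow> ('a \<Rightarrow> 'a \<Rightarrow> bool) \<Rightarrow> bool" where
  "simple_graph V E \<longleftrightarrow> finite V \<and> (\<forall>x y. E x y \<longrightarrow> x \<in> V \<and> y \<in> V)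
     \<and> (\<forall>x y. E x y \<longrightarrow> E y x) \<and> (\<forall>x. \<not> E x x)"

definition bipartite_graph :: "'a set \<Rightarrow> ('a \<Rightarrow> 'a \<Rightarrow> bool) \<Rightarrow> 'a set \<Rightarrow> 'a set \<Rightarrow> bool" where
  "bipartite_graph V E A B \<longleftrightarrow> simple_graph V E \<and> A \<union> B = V \<and> A \<inter> B = {}
     \<and> (\<forall>x y. E x y \<longrightarrow> (x \<in> A \<and> y \<in> B) \<or> (x \<in> B \<and> y \<in> A))"

definition nbhd :: "('a \<Rightarrow> 'a \<Rightarrow> bool) \<Rightarrow> 'a set \<Rightarrow> 'a set" where
  "nbhd E S = {v. \<exists>u\<in>S. E u v}"

definition bipartite_expander ::
  "'a set \<Rightarrow> ('a \<Rightarrow> 'a \<Rightarrow> bool) \<Rightarrow> 'a set \<Rightarrow> 'a set \<Rightarrow> real \<Rightarrow> bool" where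
  "bipartite_expander V E A B \<epsilon> \<longleftrightarrow> bipartite_graph V E A B \<and> card A = card B
     \<and> (\<forall>S. S \<subseteq> A \<and> real (card S) \<le> real (card A) / 2
            \<longrightarrow> real (card (nbhd E S)) \<ge> (1 + \<epsilon>) * real (card S))"

definition component_in :: "('a \<Rightarrow> 'a \<Rightarrow> bool) \<Rightarrow> 'a set \<Rightarrow> 'a \<Rightarrow> 'a set" where
  "component_in E W v = {u \<in> W. (\<lambda>x y. x \<in> W \<and> y \<in> W \<and> E x y)\<^sup>*\<^sup>* v u}"

definition separator :: "'a set \<Rightarrow> ('a \<Rightarrow> 'a \<Rightarrow> bool) \<Rightarrow> 'a set \<Rightarrow> bool" where
  "separator V E Z \<longleftrightarrow> Z \<subseteq> V \<and>
     (\<forall>v \<in> V - Z. real (card (component_in E (V - Z) v)) \<le> real (card V) / 2)"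

end

theory Submission
  imports Defs
begin

text \<open>Let \<open>W = V - Z\<close>. If some component \<open>C\<close> of \<open>G - Z\<close> contains more than \<open>n/2\<close> vertices
of \<open>A\<close>, expand a set of \<open>\<lfloor>n/2\<rfloor>\<close> of them: their neighbours lie in \<open>C \<inter> B\<close> or in \<open>Z \<inter> B\<close>, and
\<open>C \<inter> B\<close> is small because \<open>|C| \<le> n\<close>, so \<open>Z \<inter> B\<close> must absorb the expansion.
Otherwise \<open>W\<close> splits into three unions of components, each with at most \<open>n/2\<close> vertices
of \<open>A\<close>; expanding each of them and adding up gives
\<open>(1 + \<epsilon>) |W \<inter> A| \<le> |W \<inter> B| + 3 |Z \<inter> B|\<close>, i.e. \<open>\<epsilon> n \<le> 2 |Z|\<close>.\<close>

definition edge_closed :: "('a \<Rightarrow> 'a \<Rightarrow> bool) \<Rightarrow> 'a set \<Rightarrow> 'a set \<Rightarrow> bool" where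
  "edge_closed E W X \<longleftrightarrow> X \<subseteq> W \<and> (\<forall>x\<in>X. \<forall>y\<in>W. E x y \<longrightarrow> y \<in> X)"

lemma edge_closed_empty: "edge_closed E W {}"
  unfolding edge_closed_def by auto

lemma edge_closed_Un: "edge_closed E W X \<Longrightarrow> edge_closed E W Y \<Longrightarrow> edge_closed E W (X \<union> Y)"
  unfolding edge_closed_def by blast

lemma edge_closed_Diff:
  assumes "\<forall>x y. E x y \<longrightarrow> E y x" "edge_closed E W X" "edge_closed E W Y"
  shows "edge_closed E W (X - Y)"
  using assms unfolding edge_closed_def by blast

lemma edge_closed_compl:
  "\<forall>x y. E x y \<longrightarrow> E y x \<Longrightarrow> edge_closed E W X \<Longrightarrow> edge_closed E W (W - X)"
  by (rule edge_closed_Diff) (auto simp: edge_closed_def)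

lemma component_in_self: "v \<in> W \<Longrightarrow> v \<in> component_in E W v"
  unfolding component_in_def by auto

lemma component_in_subset: "component_in E W v \<subseteq> W"
  unfolding component_in_def by auto

lemma edge_closed_component_in: "edge_closed E W (component_in E W v)"
  unfolding edge_closed_def component_in_def
  by (auto intro: rtranclp.rtrancl_into_rtrancl)

lemma component_in_subset_edge_closed:
  assumes "edge_closed E W X" "v \<in> X"
  shows "component_in E W v \<subseteq> X"
proof
  fix u assume "u \<in> component_in E W v"
  then have "(\<lambda>x y. x \<in> W \<and> y \<in> W \<and> E x y)\<^sup>*\<^sup>* v u"
    unfolding component_in_def by auto
  then show "u \<in> X"
    by (induction rule: rtranclp_induct) (use assms in \<open>auto simp: edge_closed_def\<close>)
qed

lemma card_bipartition:
  assumes "finite X" "X \<subseteq> A \<union> B" "A \<inter> B = {}"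
  shows "card X = card (X \<inter> A) + card (X \<inter> B)"
proof -
  have "X - A = X \<inter> B" using assms(2,3) by auto
  then show ?thesis using card_Int_Diff[OF assms(1), of A] by simp
qed

lemma card_Int_partition3:
  assumes "finite P" "finite Q" "finite R" "P \<inter> Q = {}" "P \<inter> R = {}" "Q \<inter> R = {}"
  shows "card ((P \<union> Q \<union> R) \<inter> T) = card (P \<inter> T) + card (Q \<inter> T) + card (R \<inter> T)"
proof -
  have "card ((P \<union> Q \<union> R) \<inter> T) = card ((P \<inter> T) \<union> (Q \<inter> T)) + card (R \<inter> T)"
    by (subst card_Un_disjoint[symmetric]) (use assms in \<open>auto simp: Int_Un_distrib2\<close>)
  also have "card ((P \<inter> T) \<union> (Q \<inter> T)) = card (P \<inter> T) + card (Q \<inter> T)"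
    by (rule card_Un_disjoint) (use assms in auto)
  finally show ?thesis .
qed

lemma bipartite_expander_card_sides:
  assumes "bipartite_expander V E A B \<epsilon>" "card V = 2 * n"
  shows "card A = n" "card B = n"
proof -
  have "finite V" "A \<union> B = V" "A \<inter> B = {}" "card A = card B"
    using assms(1) unfolding bipartite_expander_def bipartite_graph_def simple_graph_def by auto
  then have "card V = card A + card B" by (metis card_Un_disjoint finite_Un)
  then show "card A = n" "card B = n" using assms(2) \<open>card A = card B\<close> by auto
qed

lemma bipartite_expander_edge_closed:
  assumes "bipartite_expander V E A B \<epsilon>" "edge_closed E (V - Z) X"
    and "S \<subseteq> X \<inter> A" "real (card S) \<le> real (card A) / 2"
  shows "(1 + \<epsilon>) * real (card S) \<le> real (card (X \<inter> B)) + real (card (Z \<inter> B))"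
proof -
  have bg: "bipartite_graph V E A B" using assms(1) unfolding bipartite_expander_def by auto
  then have fB: "finite B" unfolding bipartite_graph_def simple_graph_def by auto
  have "nbhd E S \<subseteq> (X \<inter> B) \<union> (Z \<inter> B)"
  proof
    fix v assume "v \<in> nbhd E S"
    then obtain u where u: "u \<in> X" "u \<in> A" "E u v" using assms(3) unfolding nbhd_def by auto
    then have "v \<in> B" "v \<in> V"
      using bg unfolding bipartite_graph_def simple_graph_def by blast+
    moreover have "v \<notin> Z \<Longrightarrow> v \<in> X"
      using assms(2) u \<open>v \<in> V\<close> unfolding edge_closed_def by blast
    ultimately show "v \<in> (X \<inter> B) \<union> (Z \<inter> B)" by blast
  qed
  then have "card (nbhd E S) \<le> card (X \<inter> B) + card (Z \<inter> B)"
    by (meson card_Un_le card_mono fB finite_Int finite_Un le_trans)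
  moreover have "(1 + \<epsilon>) * real (card S) \<le> real (card (nbhd E S))"
    using assms(1,3,4) unfolding bipartite_expander_def by auto
  ultimately show ?thesis by linarith
qed

lemma separator_large_component:
  assumes "0 < \<epsilon>" "bipartite_expander V E A B \<epsilon>" "card V = 2 * n" "separator V E Z"
    and "v \<in> V - Z" "real (card (component_in E (V - Z) v \<inter> A)) > real n / 2"
  shows "\<epsilon> / 2 * (real n - 1) \<le> real (card (Z \<inter> B))"
proof -
  define C where "C = component_in E (V - Z) v"
  define s where "s = n div 2"
  have "bipartite_graph V E A B" using assms(2) unfolding bipartite_expander_def by auto
  then have "finite V" "A \<union> B = V" "A \<inter> B = {}"
    unfolding bipartite_graph_def simple_graph_def by auto
  have cA: "card A = n" using bipartite_expander_card_sides[OF assms(2,3)] by simp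
  have CV: "C \<subseteq> V" using component_in_subset[of E "V - Z" v] C_def by auto
  have big: "s + 1 \<le> card (C \<inter> A)" using assms(6) unfolding C_def s_def by linarith
  then have "s \<le> card (C \<inter> A)" by simp
  then obtain S where S: "S \<subseteq> C \<inter> A" "card S = s" by (rule obtain_subset_with_card_n)
  have "real s \<le> real (card A) / 2" using cA unfolding s_def by linarith
  then have expand: "(1 + \<epsilon>) * real s \<le> real (card (C \<inter> B)) + real (card (Z \<inter> B))"
    using bipartite_expander_edge_closed[OF assms(2) edge_closed_component_in S(1)[unfolded C_def]]
      S(2) unfolding C_def by simp
  have "real (card C) \<le> real n"
    using assms(3-5) unfolding separator_def C_def by auto
  moreover have "card C = card (C \<inter> A) + card (C \<inter> B)"
    using card_bipartition CV \<open>finite V\<close> \<open>A \<union> B = V\<close> \<open>A \<inter> B = {}\<close> finite_subset by metis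
  ultimately have "real (card (C \<inter> B)) \<le> real n - real s - 1" using big by linarith
  with expand have "\<epsilon> * real s \<le> real (card (Z \<inter> B))"
    unfolding s_def by (simp add: algebra_simps)
  moreover have "\<epsilon> * (real n - 1) \<le> \<epsilon> * (2 * real s)"
    using assms(1) unfolding s_def by (intro mult_left_mono) linarith+
  ultimately show ?thesis by simp
qed

text \<open>The witness is a maximal edge-closed \<open>X\<close> with \<open>|X \<inter> A| \<le> h\<close>. If its complement \<open>Y\<close> is still
too heavy, a component \<open>C \<subseteq> Y\<close> meeting \<open>A\<close> cannot be added to \<open>X\<close>, so \<open>|X \<inter> A| + |C \<inter> A| > h\<close> and
\<open>Y - C\<close> is light.\<close>

lemma edge_closed_partition3:
  fixes h :: real
  assumes sym: "\<forall>x y. E x y \<longrightarrow> E y x" and "finite W"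
    and W_light: "real (card (W \<inter> A)) \<le> 2 * h"
    and comp_light: "\<And>v. v \<in> W \<Longrightarrow> real (card (component_in E W v \<inter> A)) \<le> h"
  obtains P Q R where "edge_closed E W P" "edge_closed E W Q" "edge_closed E W R"
    "P \<inter> Q = {}" "P \<inter> R = {}" "Q \<inter> R = {}" "P \<union> Q \<union> R = W"
    "real (card (P \<inter> A)) \<le> h" "real (card (Q \<inter> A)) \<le> h" "real (card (R \<inter> A)) \<le> h"
proof -
  let ?light = "\<lambda>X. edge_closed E W X \<and> real (card (X \<inter> A)) \<le> h"
  have "0 \<le> h" using W_light by linarith
  have "\<exists>X. ?light X \<and> (\<forall>X'. ?light X' \<longrightarrow> card (X' \<inter> A) \<le> card (X \<inter> A))"
  proof (rule ex_has_greatest_nat)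
    show "?light {}" using \<open>0 \<le> h\<close> edge_closed_empty by simp
    show "\<forall>X. ?light X \<longrightarrow> card (X \<inter> A) < card W + 1"
      using \<open>finite W\<close> by (auto simp: edge_closed_def intro: card_mono le_imp_less_Suc)
  qed
  then obtain X where X: "edge_closed E W X" "real (card (X \<inter> A)) \<le> h"
    and X_max: "\<And>X'. ?light X' \<Longrightarrow> card (X' \<inter> A) \<le> card (X \<inter> A)" by blast
  define Y where "Y = W - X"
  have Y: "edge_closed E W Y" using edge_closed_compl[OF sym X(1)] Y_def by simp
  have XW: "X \<subseteq> W" using X(1) unfolding edge_closed_def by auto
  have fin: "finite X" "finite Y" using XW \<open>finite W\<close> Y_def finite_subset by auto
  have cW: "card (W \<inter> A) = card (X \<inter> A) + card (Y \<inter> A)"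
    using card_Int_partition3[OF fin(1,2) finite.emptyI] XW Y_def by (simp add: Un_absorb1)
  show thesis
  proof (cases "real (card (Y \<inter> A)) \<le> h")
    case True
    show thesis
      by (rule that[OF X(1) Y edge_closed_empty]) (use X(2) True XW Y_def \<open>0 \<le> h\<close> in auto)
  next
    case False
    then have "Y \<inter> A \<noteq> {}" using \<open>0 \<le> h\<close> by auto
    then obtain v where v: "v \<in> Y" "v \<in> A" by blast
    define C where "C = component_in E W v"
    have C: "edge_closed E W C" using edge_closed_component_in C_def by simp
    have CY: "C \<subseteq> Y" using component_in_subset_edge_closed[OF Y v(1)] C_def by simp
    have "v \<in> C \<inter> A" using component_in_self v Y_def C_def by auto
    moreover have "finite C" using CY fin(2) finite_subset by blast
    ultimately have "card (C \<inter> A) > 0" by (auto simp: card_gt_0_iff)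
    moreover have "card ((X \<union> C) \<inter> A) = card (X \<inter> A) + card (C \<inter> A)"
      using card_Int_partition3[OF fin(1) \<open>finite C\<close> finite.emptyI] CY Y_def
      by auto
    ultimately have "real (card (X \<inter> A)) + real (card (C \<inter> A)) > h"
      using X_max[of "X \<union> C"] edge_closed_Un[OF X(1) C] by fastforce
    moreover have "card (Y \<inter> A) = card (C \<inter> A) + card ((Y - C) \<inter> A)"
      using card_Int_partition3[OF \<open>finite C\<close> _ finite.emptyI, of "Y - C" A]
        fin(2) CY by (simp add: Un_absorb1 Un_Diff_cancel)
    ultimately have "real (card ((Y - C) \<inter> A)) \<le> h" using cW W_light by linarith
    show thesis
      by (rule that[OF X(1) C edge_closed_Diff[OF sym Y C]])
        (use \<open>real (card ((Y - C) \<inter> A)) \<le> h\<close> X(2) comp_light[of v] v XW CY Y_def C_def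
          in auto)
  qed
qed

lemma separator_small_components:
  assumes "\<epsilon> \<le> 1" "bipartite_expander V E A B \<epsilon>" "card V = 2 * n" "Z \<subseteq> V"
    and small: "\<And>v. v \<in> V - Z \<Longrightarrow> real (card (component_in E (V - Z) v \<inter> A)) \<le> real n / 2"
  shows "\<epsilon> * real n \<le> 2 * real (card Z)"
proof -
  have "bipartite_graph V E A B" using assms(2) unfolding bipartite_expander_def by auto
  then have fin: "finite V" and AB: "A \<union> B = V" "A \<inter> B = {}"
    and sym: "\<forall>x y. E x y \<longrightarrow> E y x"
    unfolding bipartite_graph_def simple_graph_def by auto
  have cA: "card A = n" and cB: "card B = n" using bipartite_expander_card_sides[OF assms(2,3)] .
  have split: "card X = card (X \<inter> A) + card (X \<inter> B)" if "X \<subseteq> V" for X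
    using card_bipartition[of X A B] that fin AB finite_subset by metis
  have "card ((V - Z) \<inter> A) \<le> card A" using fin AB by (intro card_mono) auto
  then have "real (card ((V - Z) \<inter> A)) \<le> 2 * (real n / 2)" using cA by simp
  then obtain P Q R where parts:
    "edge_closed E (V - Z) P" "edge_closed E (V - Z) Q" "edge_closed E (V - Z) R"
    "P \<inter> Q = {}" "P \<inter> R = {}" "Q \<inter> R = {}" "P \<union> Q \<union> R = V - Z"
    "real (card (P \<inter> A)) \<le> real n / 2" "real (card (Q \<inter> A)) \<le> real n / 2"
    "real (card (R \<inter> A)) \<le> real n / 2"
    using edge_closed_partition3[OF sym _ _ small] fin by blast
  have "finite P" "finite Q" "finite R" using parts(7) fin by (auto intro: finite_subset)
  note parts_card = card_Int_partition3[OF this parts(4-6), unfolded parts(7)]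
  have expand: "(1 + \<epsilon>) * real (card (X \<inter> A)) \<le> real (card (X \<inter> B)) + real (card (Z \<inter> B))"
    if "edge_closed E (V - Z) X" "real (card (X \<inter> A)) \<le> real n / 2" for X
    using bipartite_expander_edge_closed[OF assms(2) that(1) _] that(2) cA by simp
  have expand_all: "(1 + \<epsilon>) * real (card ((V - Z) \<inter> A))
      \<le> real (card ((V - Z) \<inter> B)) + 3 * real (card (Z \<inter> B))"
    using expand[OF parts(1,8)] expand[OF parts(2,9)] expand[OF parts(3,10)]
    unfolding parts_card by (simp add: algebra_simps)
  have sides: "card ((V - Z) \<inter> A) + card (Z \<inter> A) = n" "card ((V - Z) \<inter> B) + card (Z \<inter> B) = n"
  proof -
    have "(V - Z) \<inter> A = A - Z" "(V - Z) \<inter> B = B - Z" "finite A" "finite B" using fin AB by auto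
    then show "card ((V - Z) \<inter> A) + card (Z \<inter> A) = n" "card ((V - Z) \<inter> B) + card (Z \<inter> B) = n"
      using cA cB card_Int_Diff[of A Z] card_Int_Diff[of B Z] by (simp_all add: Int_commute)
  qed
  then have "\<epsilon> * real n = \<epsilon> * real (card ((V - Z) \<inter> A)) + \<epsilon> * real (card (Z \<inter> A))"
    by (metis distrib_left of_nat_add)
  moreover have "card Z = card (Z \<inter> A) + card (Z \<inter> B)" using split assms(4) by blast
  moreover have "\<epsilon> * real (card (Z \<inter> A)) \<le> real (card (Z \<inter> A))"
    using assms(1) mult_right_mono[of \<epsilon> 1] by simp
  ultimately show ?thesis using expand_all sides by (simp add: algebra_simps)
qed

theorem lemma14:
  fixes V :: "'a set" and E :: "'a \<Rightarrow> 'a \<Rightarrow> bool" and A B Z :: "'a set"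
    and \<epsilon> :: real and n :: nat
  assumes "0 < \<epsilon>" and "\<epsilon> \<le> 1"
    and "bipartite_expander V E A B \<epsilon>"
    and "card V = 2 * n"
    and "separator V E Z"
  shows "real (card Z) \<ge> \<epsilon> / 2 * (real n - 1) - 1"
proof -
  have "finite V" using assms(3)
    unfolding bipartite_expander_def bipartite_graph_def simple_graph_def by blast
  moreover have "Z \<subseteq> V" using assms(5) unfolding separator_def by simp
  ultimately have "finite Z" by (rule finite_subset[rotated])
  show ?thesis
  proof (cases "\<exists>v \<in> V - Z. real (card (component_in E (V - Z) v \<inter> A)) > real n / 2")
    case True
    then obtain v where "v \<in> V - Z" "real (card (component_in E (V - Z) v \<inter> A)) > real n / 2"
      by blast
    then have "\<epsilon> / 2 * (real n - 1) \<le> real (card (Z \<inter> B))"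
      using separator_large_component[OF assms(1,3-5)] by blast
    moreover have "card (Z \<inter> B) \<le> card Z" using \<open>finite Z\<close> by (intro card_mono) auto
    ultimately show ?thesis by linarith
  next
    case False
    have "\<epsilon> * real n \<le> 2 * real (card Z)"
      by (rule separator_small_components[OF assms(2-4) \<open>Z \<subseteq> V\<close>])
        (use False in \<open>auto simp: not_less\<close>)
    then show ?thesis using assms(1) by (simp add: algebra_simps)
  qed
qed

end
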